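(* Let $\mathcal C$ be a $k$-coloured operad admitting the presentation $(G,\leftrightarrow)$. Then the enveloping operad $\mathrm{Env}(\mathcal C)$ admits the presentation $(\{\mathfrak c(g):g\in G\},\leftrightarrow')$. Here $S'\leftrightarrow' T'$ if and only if $S\leftrightarrow T$, where $S'$ (resp. $T'$) denotes the uncoloured syntax tree obtained from the coloured syntax tree $S$ (resp. $T$) by replacing each node labelled $x$ by the corolla $\mathfrak c(x)$ (i.e. forgetting colours). In other words, $\mathrm{Env}(\mathcal C)$ is isomorphic to the free uncoloured operad on the elements of $G$ (colours forgotten) modulo the operadic congruence generated by the relations $S'\leftrightarrow'T'$.
   Context: All operads are nonsymmetric operads in the category of sets. Fix $k\ge1$ and write $[k]=\{1,\dots,k\}$. A $k$-coloured collection is a graded set $G=\biguplus_{n\ge2}G(n)$ with maps $\mathrm{Out},\mathrm{In}_i$ to $[k]$ ($1\le i\le n$ for elements of $G(n)$). The free $k$-coloured operad $\mathcal F(G)$ consists of coloured syntax trees on $G$: planar rooted trees whose internal nodes of arity $\ell$ are labelled by elements of $G(\ell)$, such that if a node labelled $y$ is the $i$th child of a node labelled $x$, then $\mathrm{In}_i(x)=\mathrm{Out}(y)$. Composition is grafting of a root on a leaf of matching colour, together with one unit per colour. A $k$-coloured operad $\mathcal C$ (partial compositions $x\circ_i y$ defined exactly when $\mathrm{Out}(y)=\mathrm{In}_i(x)$, with $\mathcal C(1)$ consisting only of one unit per colour, and each $\mathcal C(n)$ finite) admits the presentation $(G,\leftrightarrow)$ if $G$ is a $k$-coloured collection and $\leftrightarrow$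 is an equivalence relation on $\mathcal F(G)$ such that $\mathcal C$ is isomorphic to $\mathcal F(G)/\!\equiv$, where $\equiv$ is the smallest coloured operadic congruence containing $\leftrightarrow$. The same notion applies to uncoloured operads ($k=1$). Let $\mathcal C^+=\mathcal C\setminus\mathcal C(1)$. The enveloping operad $\mathrm{Env}(\mathcal C)$ is the quotient of the free uncoloured operad on $\mathcal C^+$ (colours forgotten) by the smallest operadic congruence with $\mathfrak c(x)\circ_i\mathfrak c(y)\equiv\mathfrak c(x\circ_i y)$ whenever $x\circ_i y$ is defined in $\mathcal C$. Here $\mathfrak c(x)$ denotes the corolla (one-node tree) labelled $x$. *)

theory Defs
  imports Main
begin

text \<open>A (k-)coloured operad is described by a carrier set, an arity map, an output colour,
  input colours (indexed from 1), total-function partial compositions (meaningful only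
  where defined) and one unit per colour.
  Uncoloured operads are the case k = 1.\<close>

record 'a coloperad =
  elems :: "'a set"
  ar    :: "'a \<Rightarrow> nat"
  outc  :: "'a \<Rightarrow> nat"
  inc   :: "'a \<Rightarrow> nat \<Rightarrow> nat"
  pcomp :: "'a \<Rightarrow> nat \<Rightarrow> 'a \<Rightarrow> 'a"
  unit  :: "nat \<Rightarrow> 'a"

definition comp_defined :: "'a coloperad \<Rightarrow> 'a \<Rightarrow> nat \<Rightarrow> 'a \<Rightarrow> bool" where
  "comp_defined Op x i y \<longleftrightarrow> x \<in> elems Op \<and> y \<in> elems Op \<and> 1 \<le> i \<and> i \<le> ar Op x
     \<and> inc Op x i = outc Op y"

definition is_coloperad :: "nat \<Rightarrow> 'a coloperad \<Rightarrow> bool" where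
  "is_coloperad k Op \<longleftrightarrow>
     (\<forall>x\<in>elems Op. 1 \<le> ar Op x \<and> outc Op x \<in> {1..k} \<and> (\<forall>i\<in>{1..ar Op x}. inc Op x i \<in> {1..k}))
   \<and> (\<forall>x i y. comp_defined Op x i y \<longrightarrow>
        pcomp Op x i y \<in> elems Op
      \<and> ar Op (pcomp Op x i y) = ar Op x + ar Op y - 1
      \<and> outc Op (pcomp Op x i y) = outc Op x
      \<and> (\<forall>j\<in>{1..ar Op x + ar Op y - 1}. inc Op (pcomp Op x i y) j =
            (if j < i then inc Op x j
             else if j < i + ar Op y then inc Op y (j - i + 1)
             else inc Op x (j + 1 - ar Op y))))
   \<and> (\<forall>c\<in>{1..k}. unit Op c \<in> elems Op \<and> ar Op (unit Op c) = 1 \<and> outc Op (unit Op c) = c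
        \<and> inc Op (unit Op c) 1 = c)
   \<and> (\<forall>x\<in>elems Op. pcomp Op (unit Op (outc Op x)) 1 x = x)
   \<and> (\<forall>x\<in>elems Op. \<forall>i\<in>{1..ar Op x}. pcomp Op x i (unit Op (inc Op x i)) = x)
   \<and> (\<forall>x y z i j. comp_defined Op x i y \<longrightarrow> comp_defined Op y j z \<longrightarrow>
        pcomp Op (pcomp Op x i y) (i + j - 1) z = pcomp Op x i (pcomp Op y j z))
   \<and> (\<forall>x y z i j. comp_defined Op x i y \<longrightarrow> comp_defined Op x j z \<longrightarrow> i < j \<longrightarrow>
        pcomp Op (pcomp Op x i y) (j + ar Op y - 1) z = pcomp Op (pcomp Op x j z) i y)
   \<and> (\<forall>x\<in>elems Op. ar Op x = 1 \<longrightarrow> (\<exists>c\<in>{1..k}. x = unit Op c))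
   \<and> (\<forall>n. finite {x\<in>elems Op. ar Op x = n})"

definition is_iso :: "nat \<Rightarrow> 'a coloperad \<Rightarrow> 'b coloperad \<Rightarrow> ('a \<Rightarrow> 'b) \<Rightarrow> bool" where
  "is_iso k Op1 Op2 f \<longleftrightarrow> bij_betw f (elems Op1) (elems Op2)
   \<and> (\<forall>x\<in>elems Op1. ar Op2 (f x) = ar Op1 x \<and> outc Op2 (f x) = outc Op1 x
        \<and> (\<forall>i\<in>{1..ar Op1 x}. inc Op2 (f x) i = inc Op1 x i))
   \<and> (\<forall>x i y. comp_defined Op1 x i y \<longrightarrow> f (pcomp Op1 x i y) = pcomp Op2 (f x) i (f y))
   \<and> (\<forall>c\<in>{1..k}. f (unit Op1 c) = unit Op2 c)"

definition isomorphic :: "nat \<Rightarrow> 'a coloperad \<Rightarrow> 'b coloperad \<Rightarrow> bool" where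
  "isomorphic k Op1 Op2 \<longleftrightarrow> (\<exists>f. is_iso k Op1 Op2 f)"

definition is_congruence :: "'a coloperad \<Rightarrow> 'a rel \<Rightarrow> bool" where
  "is_congruence Op E \<longleftrightarrow> equiv (elems Op) E
   \<and> (\<forall>(x,y)\<in>E. ar Op x = ar Op y \<and> outc Op x = outc Op y
        \<and> (\<forall>i\<in>{1..ar Op x}. inc Op x i = inc Op y i))
   \<and> (\<forall>x x' y y' i. (x,x') \<in> E \<longrightarrow> (y,y') \<in> E \<longrightarrow> comp_defined Op x i y \<longrightarrow>
        (pcomp Op x i y, pcomp Op x' i y') \<in> E)"

definition cong_gen :: "'a coloperad \<Rightarrow> 'a rel \<Rightarrow> 'a rel" where
  "cong_gen Op R = {(x,y). \<forall>E. is_congruence Op E \<and> R \<subseteq> E \<longrightarrow> (x,y) \<in> E}"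

definition quot_op :: "'a coloperad \<Rightarrow> 'a rel \<Rightarrow> 'a set coloperad" where
  "quot_op Op E = \<lparr> elems = elems Op // E,
     ar = (\<lambda>X. ar Op (SOME x. x \<in> X)),
     outc = (\<lambda>X. outc Op (SOME x. x \<in> X)),
     inc = (\<lambda>X i. inc Op (SOME x. x \<in> X) i),
     pcomp = (\<lambda>X i Y. E `` {pcomp Op (SOME x. x \<in> X) i (SOME y. y \<in> Y)}),
     unit = (\<lambda>c. E `` {unit Op c}) \<rparr>"

definition is_collection :: "nat \<Rightarrow> 'g set \<Rightarrow> ('g \<Rightarrow> nat) \<Rightarrow> ('g \<Rightarrow> nat) \<Rightarrow> ('g \<Rightarrow> nat \<Rightarrow> nat) \<Rightarrow> bool" where
  "is_collection k G arG outG inG \<longleftrightarrow>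
     (\<forall>g\<in>G. 2 \<le> arG g \<and> outG g \<in> {1..k} \<and> (\<forall>i\<in>{1..arG g}. inG g i \<in> {1..k}))"

text \<open>Planar rooted trees; a leaf carries its colour (a tree that is a single leaf of
  colour c is the unit of colour c).\<close>

datatype 'g stree = Leaf nat | Node 'g "'g stree list"

fun leaf_cols :: "'g stree \<Rightarrow> nat list" where
  "leaf_cols (Leaf c) = [c]"
| "leaf_cols (Node g ts) = concat (map leaf_cols ts)"

definition nleaves :: "'g stree \<Rightarrow> nat" where
  "nleaves t = length (leaf_cols t)"

fun tout :: "('g \<Rightarrow> nat) \<Rightarrow> 'g stree \<Rightarrow> nat" where
  "tout outG (Leaf c) = c"
| "tout outG (Node g ts) = outG g"

fun valid_tree :: "nat \<Rightarrow> 'g set \<Rightarrow> ('g \<Rightarrow> nat) \<Rightarrow> ('g \<Rightarrow> nat) \<Rightarrow> ('g \<Rightarrow> nat \<Rightarrow> nat)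
                    \<Rightarrow> 'g stree \<Rightarrow> bool" where
  "valid_tree k G arG outG inG (Leaf c) \<longleftrightarrow> c \<in> {1..k}"
| "valid_tree k G arG outG inG (Node g ts) \<longleftrightarrow> g \<in> G \<and> length ts = arG g
     \<and> (\<forall>t\<in>set ts. valid_tree k G arG outG inG t)
     \<and> (\<forall>i<length ts. tout outG (ts ! i) = inG g (i + 1))"

text \<open>Grafting the root of T on the i-th leaf (1-indexed) of a tree.\<close>

fun graft :: "'g stree \<Rightarrow> nat \<Rightarrow> 'g stree \<Rightarrow> 'g stree"
and graft_list :: "'g stree list \<Rightarrow> nat \<Rightarrow> 'g stree \<Rightarrow> 'g stree list" where
  "graft (Leaf c) i T = (if i = 1 then T else Leaf c)"
| "graft (Node g ts) i T = Node g (graft_list ts i T)"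
| "graft_list [] i T = []"
| "graft_list (t # ts) i T =
     (if i \<le> nleaves t then graft t i T # ts else t # graft_list ts (i - nleaves t) T)"

definition free_op :: "'g set \<Rightarrow> ('g \<Rightarrow> nat) \<Rightarrow> ('g \<Rightarrow> nat) \<Rightarrow> ('g \<Rightarrow> nat \<Rightarrow> nat) \<Rightarrow> nat
                       \<Rightarrow> 'g stree coloperad" where
  "free_op G arG outG inG k = \<lparr> elems = {t. valid_tree k G arG outG inG t},
     ar = nleaves,
     outc = tout outG,
     inc = (\<lambda>t i. leaf_cols t ! (i - 1)),
     pcomp = graft,
     unit = Leaf \<rparr>"

text \<open>Op admits the presentation (G, R): R is a relation on F(G) relating only syntax trees
  with the same profile (so that the congruence it generates exists), and Op is
  isomorphic to F(G) modulo the smallest operadic congruence containing R.\<close>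

definition admits_presentation :: "nat \<Rightarrow> 'a coloperad \<Rightarrow> 'g set \<Rightarrow> ('g \<Rightarrow> nat) \<Rightarrow> ('g \<Rightarrow> nat)
    \<Rightarrow> ('g \<Rightarrow> nat \<Rightarrow> nat) \<Rightarrow> 'g stree rel \<Rightarrow> bool" where
  "admits_presentation k Op G arG outG inG R \<longleftrightarrow>
     (let F = free_op G arG outG inG k in
       R \<subseteq> elems F \<times> elems F
     \<and> (\<forall>(S,T)\<in>R. ar F S = ar F T \<and> outc F S = outc F T
          \<and> (\<forall>i\<in>{1..ar F S}. inc F S i = inc F T i))
     \<and> isomorphic k Op (quot_op F (cong_gen F R)))"

definition Cplus :: "'a coloperad \<Rightarrow> 'a set" where
  "Cplus C = {x \<in> elems C. 2 \<le> ar C x}"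

definition corolla :: "'a coloperad \<Rightarrow> 'a \<Rightarrow> 'a stree" where
  "corolla C x = Node x (replicate (ar C x) (Leaf 1))"

definition env_free :: "'a coloperad \<Rightarrow> 'a stree coloperad" where
  "env_free C = free_op (Cplus C) (ar C) (\<lambda>_. 1) (\<lambda>_ _. 1) 1"

definition env_rel :: "'a coloperad \<Rightarrow> 'a stree rel" where
  "env_rel C = {(graft (corolla C x) i (corolla C y), corolla C (pcomp C x i y)) | x i y.
                  x \<in> Cplus C \<and> y \<in> Cplus C \<and> comp_defined C x i y}"

definition Env :: "'a coloperad \<Rightarrow> 'a stree set coloperad" where
  "Env C = quot_op (env_free C) (cong_gen (env_free C) (env_rel C))"

fun forget :: "'g stree \<Rightarrow> 'g stree" where
  "forget (Leaf c) = Leaf 1"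
| "forget (Node g ts) = Node g (map forget ts)"

end

theory Submission
  imports Defs
begin

text \<open>
  Choose for every element \<open>x\<close> of \<open>\<C>\<close> a syntax tree \<open>rep x\<close> over \<open>G\<close> representing it, and let
  every generator \<open>g\<close> name the element of \<open>\<C>\<close> presented by its coloured corolla. Replacing each node
  \<open>x\<close> of a tree over \<open>\<C>\<^sup>+\<close> by the uncoloured tree \<open>rep x\<close>, and relabelling each node \<open>g\<close> of a tree
  over \<open>G\<close> by the element it names, gives two maps preserving grafting. The first sends the
  defining relations of \<open>Env(\<C>)\<close> into the congruence generated by the uncoloured relations, since
  forgetting colours is itself compatible with grafting. The second sends the uncoloured
  relations into the congruence of \<open>Env(\<C>)\<close>, because there every tree over \<open>G\<close> collapses to the
  corolla of its value in \<open>\<C>\<close>: split off one non-leaf child and apply one defining relation.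
  The two maps are inverse to each other up to these congruences, so they induce an isomorphism
  of the quotients.
\<close>

section \<open>Syntax trees\<close>

abbreviation nleaves_list :: "'g stree list \<Rightarrow> nat" where
  "nleaves_list ts \<equiv> \<Sum>t\<leftarrow>ts. nleaves t"

lemma length_leaf_cols [simp]: "length (leaf_cols t) = nleaves t"
  by (simp add: nleaves_def)

lemma length_concat_leaf_cols [simp]: "length (concat (map leaf_cols ts)) = nleaves_list ts"
  by (induction ts) simp_all

lemma nleaves_Leaf [simp]: "nleaves (Leaf c) = 1"
  by (simp add: nleaves_def)

lemma nleaves_Node [simp]: "nleaves (Node g ts) = nleaves_list ts"
  unfolding nleaves_def by simp

lemma nleaves_list_list_all2:
  "list_all2 (\<lambda>u v. nleaves u = nleaves v) us vs \<Longrightarrow> nleaves_list us = nleaves_list vs"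
  by (induction rule: list_all2_induct) simp_all

lemma graft_out_of_range:
  shows "i = 0 \<or> nleaves t < i \<Longrightarrow> graft t i s = t"
    and "i = 0 \<or> nleaves_list ts < i \<Longrightarrow> graft_list ts i s = ts"
  by (induction t i s and ts i s rule: graft_graft_list.induct) auto

lemma length_graft_list [simp]: "length (graft_list ts i s) = length ts"
  by (induction ts arbitrary: i) auto

lemma graft_list_append:
  "graft_list (xs @ ys) i s = (if i \<le> nleaves_list xs then graft_list xs i s @ ys
      else xs @ graft_list ys (i - nleaves_list xs) s)"
  by (induction xs arbitrary: i) (auto simp: graft_out_of_range(2) diff_diff_add)

lemma leaf_cols_graft:
  shows "1 \<le> i \<Longrightarrow> i \<le> nleaves t \<Longrightarrow>
      leaf_cols (graft t i s) = take (i - 1) (leaf_cols t) @ leaf_cols s @ drop i (leaf_cols t)"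
    and "1 \<le> i \<Longrightarrow> i \<le> nleaves_list ts \<Longrightarrow>
      concat (map leaf_cols (graft_list ts i s)) =
        take (i - 1) (concat (map leaf_cols ts)) @ leaf_cols s @ drop i (concat (map leaf_cols ts))"
proof (induction t i s and ts i s rule: graft_graft_list.induct)
  case (4 t ts i s)
  then show ?case
    by (cases "i \<le> nleaves t") auto
qed auto

lemma nleaves_graft:
  "1 \<le> i \<Longrightarrow> i \<le> nleaves t \<Longrightarrow> nleaves (graft t i s) = nleaves t + nleaves s - 1"
  unfolding nleaves_def[of "graft t i s"] by (simp add: leaf_cols_graft)

lemma graft_list_update_Leaf:
  assumes "j < length ws" "ws ! j = Leaf c"
  shows "graft_list ws (nleaves_list (take j ws) + 1) u = ws[j := u]"
proof -
  have "graft_list (take j ws @ Leaf c # drop (Suc j) ws) (nleaves_list (take j ws) + 1) u =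
      take j ws @ u # drop (Suc j) ws"
    by (simp add: graft_list_append)
  then show ?thesis
    using assms by (metis id_take_nth_drop upd_conv_take_nth_drop)
qed

lemma Node_eq_graft_child:
  "j < length ts \<Longrightarrow>
     Node g ts = graft (Node g (ts[j := Leaf c])) (nleaves_list (take j ts) + 1) (ts ! j)"
  using graft_list_update_Leaf[of j "ts[j := Leaf c]" c "ts ! j"] by simp

lemma size_update_Leaf_less:
  assumes "j < length ts" "ts ! j = Node h us"
  shows "size (Node g (ts[j := Leaf c])) < size (Node g ts)"
proof -
  have "size_list size ts = size_list size (take j ts @ Node h us # drop (Suc j) ts)"
    using assms by (metis id_take_nth_drop)
  moreover have "ts[j := Leaf c] = take j ts @ Leaf c # drop (Suc j) ts"
    using assms by (metis upd_conv_take_nth_drop)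
  ultimately show ?thesis
    by simp
qed

fun fill_leaves :: "'g stree \<Rightarrow> 'g stree list \<Rightarrow> 'g stree"
and fill_leaves_list :: "'g stree list \<Rightarrow> 'g stree list \<Rightarrow> 'g stree list" where
  "fill_leaves (Leaf c) us = (if us = [] then Leaf c else hd us)"
| "fill_leaves (Node g ts) us = Node g (fill_leaves_list ts us)"
| "fill_leaves_list [] us = []"
| "fill_leaves_list (t # ts) us =
     fill_leaves t (take (nleaves t) us) # fill_leaves_list ts (drop (nleaves t) us)"

lemma leaf_cols_fill_leaves:
  shows "length us = nleaves t \<Longrightarrow> leaf_cols (fill_leaves t us) = concat (map leaf_cols us)"
    and "length us = nleaves_list ts \<Longrightarrow>
      concat (map leaf_cols (fill_leaves_list ts us)) = concat (map leaf_cols us)"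
proof (induction t us and ts us rule: fill_leaves_fill_leaves_list.induct)
  case (1 c us)
  then show ?case by (cases us) auto
next
  case (4 t ts us)
  then show ?case
    by (simp del: nleaves_Node) (metis append_take_drop_id concat_append map_append)
qed auto

lemma nleaves_fill_leaves:
  "length us = nleaves t \<Longrightarrow> nleaves (fill_leaves t us) = nleaves_list us"
  unfolding nleaves_def[of "fill_leaves t us"] by (simp add: leaf_cols_fill_leaves)

lemma graft_fill_leaves:
  shows "length us = nleaves t \<Longrightarrow> graft (fill_leaves t us) i s = fill_leaves t (graft_list us i s)"
    and "length us = nleaves_list ts \<Longrightarrow>
      graft_list (fill_leaves_list ts us) i s = fill_leaves_list ts (graft_list us i s)"
proof (induction t us and ts us arbitrary: i and i rule: fill_leaves_fill_leaves_list.induct)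
  case (1 c us)
  then obtain u where "us = [u]"
    by (cases us) auto
  then show ?case
    using graft_out_of_range(1)[of i u s] by auto
next
  case (4 t ts us)
  let ?n = "nleaves t"
  have len: "length (take ?n us) = ?n" "length (drop ?n us) = nleaves_list ts"
    using "4.prems" by auto
  have "graft_list us i s = (if i \<le> nleaves_list (take ?n us)
      then graft_list (take ?n us) i s @ drop ?n us
      else take ?n us @ graft_list (drop ?n us) (i - nleaves_list (take ?n us)) s)"
    using graft_list_append[of "take ?n us" "drop ?n us" i s] by simp
  then show ?case
    using "4.IH"(1)[OF len(1)] "4.IH"(2)[OF len(2)] len nleaves_fill_leaves[OF len(1)]
    by (auto simp: min_def)
qed simp_all

lemma fill_leaves_leaves: "fill_leaves t (map Leaf (leaf_cols t)) = t"
proof (induction t)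
  case (Node g ts)
  then have "fill_leaves_list ts (map Leaf (concat (map leaf_cols ts))) = ts"
    by (induction ts) auto
  then show ?case by simp
qed simp

lemma fill_leaves_list_replicate: "length ts = n \<Longrightarrow> fill_leaves_list (replicate n (Leaf c)) ts = ts"
proof (induction n arbitrary: ts)
  case (Suc n)
  then show ?case by (cases ts) auto
qed simp

lemma fill_leaves_update:
  assumes "length ws = nleaves t" "j < length ws" "ws ! j = Leaf c"
  shows "fill_leaves t (ws[j := u]) = graft (fill_leaves t ws) (nleaves_list (take j ws) + 1) u"
  using graft_fill_leaves(1)[OF assms(1)] graft_list_update_Leaf[OF assms(2,3)] by simp

lemma fill_leaves_take_Suc:
  assumes "length xs = n" "j < n" "nleaves t = n"
  shows "fill_leaves t (take (Suc j) xs @ replicate (n - Suc j) (Leaf 1)) =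
    graft (fill_leaves t (take j xs @ replicate (n - j) (Leaf 1))) (nleaves_list (take j xs) + 1) (xs ! j)"
proof -
  let ?ws = "take j xs @ replicate (n - j) (Leaf 1)"
  have "n - j = Suc (n - Suc j)"
    using assms by simp
  then have "take (Suc j) xs @ replicate (n - Suc j) (Leaf 1) = ?ws[j := xs ! j]"
    using assms by (simp add: take_Suc_conv_app_nth list_update_append)
  moreover have "fill_leaves t (?ws[j := xs ! j]) =
      graft (fill_leaves t ?ws) (nleaves_list (take j ?ws) + 1) (xs ! j)"
    by (rule fill_leaves_update) (use assms in \<open>simp_all add: nth_append\<close>)
  ultimately show ?thesis
    using assms by simp
qed

fun relabel :: "('a \<Rightarrow> 'b) \<Rightarrow> 'a stree \<Rightarrow> 'b stree" where
  "relabel h (Leaf c) = Leaf 1"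
| "relabel h (Node g ts) = Node (h g) (map (relabel h) ts)"

lemma forget_eq_relabel: "forget t = relabel id t"
  by (induction t) auto

lemma relabel_forget [simp]: "relabel h (forget t) = relabel h t"
  by (induction t) auto

lemma leaf_cols_relabel: "leaf_cols (relabel h t) = replicate (nleaves t) 1"
proof (induction t)
  case (Node g ts)
  then have "concat (map (leaf_cols \<circ> relabel h) ts) = replicate (nleaves_list ts) 1"
    by (induction ts) (auto simp: replicate_add)
  then show ?case by simp
qed simp

lemma nleaves_relabel [simp]: "nleaves (relabel h t) = nleaves t"
  by (metis leaf_cols_relabel length_leaf_cols length_replicate)

lemma relabel_graft:
  shows "relabel h (graft t i s) = graft (relabel h t) i (relabel h s)"
    and "map (relabel h) (graft_list ts i s) = graft_list (map (relabel h) ts) i (relabel h s)"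
  by (induction t i s and ts i s rule: graft_graft_list.induct) auto

lemma relabel_fill_leaves:
  shows "relabel h (fill_leaves t us) = fill_leaves (relabel h t) (map (relabel h) us)"
    and "map (relabel h) (fill_leaves_list ts us) =
      fill_leaves_list (map (relabel h) ts) (map (relabel h) us)"
  by (induction t us and ts us rule: fill_leaves_fill_leaves_list.induct)
    (auto simp: take_map drop_map hd_map)

lemma leaf_cols_forget: "leaf_cols (forget t) = replicate (nleaves t) 1"
  by (simp add: forget_eq_relabel leaf_cols_relabel)

lemma nleaves_forget [simp]: "nleaves (forget t) = nleaves t"
  by (simp add: forget_eq_relabel)

lemma forget_graft: "forget (graft t i s) = graft (forget t) i (forget s)"
  by (simp add: forget_eq_relabel relabel_graft)

section \<open>Well-coloured trees\<close>

lemma elems_free_op [simp]: "t \<in> elems (free_op G arG outG inG k) \<longleftrightarrow> valid_tree k G arG outG inG t"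
  by (simp add: free_op_def)

lemma comp_defined_free:
  "comp_defined (free_op G arG outG inG k) x i y \<longleftrightarrow>
     valid_tree k G arG outG inG x \<and> valid_tree k G arG outG inG y \<and> 1 \<le> i \<and> i \<le> nleaves x
     \<and> leaf_cols x ! (i - 1) = tout outG y"
  by (auto simp: comp_defined_def free_op_def)

lemma valid_graft:
  shows "valid_tree k G arG outG inG t \<Longrightarrow> valid_tree k G arG outG inG s \<Longrightarrow> 1 \<le> i \<Longrightarrow>
      i \<le> nleaves t \<Longrightarrow> leaf_cols t ! (i - 1) = tout outG s \<Longrightarrow>
      valid_tree k G arG outG inG (graft t i s) \<and> tout outG (graft t i s) = tout outG t"
    and "\<forall>t\<in>set ts. valid_tree k G arG outG inG t \<Longrightarrow> valid_tree k G arG outG inG s \<Longrightarrow>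
      1 \<le> i \<Longrightarrow> i \<le> nleaves_list ts \<Longrightarrow> concat (map leaf_cols ts) ! (i - 1) = tout outG s \<Longrightarrow>
      (\<forall>t\<in>set (graft_list ts i s). valid_tree k G arG outG inG t)
        \<and> map (tout outG) (graft_list ts i s) = map (tout outG) ts"
proof (induction t i s and ts i s rule: graft_graft_list.induct)
  case (2 g ts i s)
  then have valid: "\<forall>t\<in>set (graft_list ts i s). valid_tree k G arG outG inG t"
    and touts: "map (tout outG) (graft_list ts i s) = map (tout outG) ts"
    by simp_all
  from touts have "\<forall>j<length ts. tout outG (graft_list ts i s ! j) = tout outG (ts ! j)"
    by (metis length_graft_list nth_map)
  with "2.prems"(1) valid show ?case
    by simp
next
  case (4 t ts i s)
  show ?case
  proof (cases "i \<le> nleaves t")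
    case True
    with "4.prems" have "leaf_cols t ! (i - 1) = tout outG s"
      by (simp add: nth_append split: if_splits)
    with "4.IH"(1)[OF True] "4.prems" True show ?thesis
      by simp
  next
    case False
    with "4.prems" have "concat (map leaf_cols ts) ! (i - nleaves t - 1) = tout outG s"
      by (simp add: nth_append split: if_splits)
    with "4.IH"(2)[OF False] "4.prems" False show ?thesis
      by simp
  qed
qed auto

lemma valid_tree_nleaves_ge:
  assumes "\<And>g. g \<in> G \<Longrightarrow> 2 \<le> arG g"
  shows "valid_tree k G arG outG inG t \<Longrightarrow> 1 \<le> nleaves t \<and> (\<forall>g ts. t = Node g ts \<longrightarrow> 2 \<le> nleaves t)"
proof (induction t)
  case (Node g ts)
  then have "\<forall>t\<in>set ts. 1 \<le> nleaves t"
    by auto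
  then have "length ts \<le> nleaves_list ts"
    by (induction ts) auto
  with Node assms[of g] show ?case
    by auto
qed simp

text \<open>These abbreviations use \<open>Suc 0\<close>, the simp normal form of \<open>1\<close>, so that they survive simplification.\<close>

abbreviation free_op1 :: "'g set \<Rightarrow> ('g \<Rightarrow> nat) \<Rightarrow> 'g stree coloperad" where
  "free_op1 G arG \<equiv> free_op G arG (\<lambda>_. Suc 0) (\<lambda>_ _. Suc 0) (Suc 0)"

abbreviation valid1 :: "'g set \<Rightarrow> ('g \<Rightarrow> nat) \<Rightarrow> 'g stree \<Rightarrow> bool" where
  "valid1 G arG \<equiv> valid_tree (Suc 0) G arG (\<lambda>_. Suc 0) (\<lambda>_ _. Suc 0)"

lemma valid1_leaf_cols: "valid1 G arG t \<Longrightarrow> leaf_cols t = replicate (nleaves t) 1"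
proof (induction t)
  case (Node g ts)
  then have "\<forall>t\<in>set ts. leaf_cols t = replicate (nleaves t) 1"
    by auto
  then have "concat (map leaf_cols ts) = replicate (nleaves_list ts) 1"
    by (induction ts) (auto simp: replicate_add)
  then show ?case by simp
qed simp

lemma valid1_tout: "valid1 G arG t \<Longrightarrow> tout (\<lambda>_. Suc 0) t = Suc 0"
  by (cases t) auto

lemma comp_defined_free1:
  "comp_defined (free_op1 G arG) x i y \<longleftrightarrow> valid1 G arG x \<and> valid1 G arG y \<and> 1 \<le> i \<and> i \<le> nleaves x"
  unfolding comp_defined_free using valid1_leaf_cols[of G arG x] valid1_tout[of G arG y]
  by auto

lemma valid1_graft:
  assumes "valid1 G arG x" "valid1 G arG y" "1 \<le> i" "i \<le> nleaves x"
  shows "valid1 G arG (graft x i y)"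
  using valid_graft(1)[OF assms] valid1_leaf_cols[OF assms(1)] valid1_tout[OF assms(2)] assms(3,4)
  by simp

lemma tout_relabel [simp]: "tout (\<lambda>_. Suc 0) (relabel h t) = Suc 0"
  by (cases t) auto

lemma tout_forget [simp]: "tout (\<lambda>_. Suc 0) (forget t) = Suc 0"
  by (cases t) auto

lemma valid1_relabel:
  assumes "\<And>g. g \<in> G \<Longrightarrow> h g \<in> G' \<and> arG' (h g) = arG g"
  shows "valid_tree k G arG outG inG t \<Longrightarrow> valid1 G' arG' (relabel h t)"
  by (induction t) (auto simp: assms)

lemma valid1_forget: "valid_tree k G arG outG inG t \<Longrightarrow> valid1 G arG (forget t)"
  unfolding forget_eq_relabel by (rule valid1_relabel) auto

lemma valid1_fill_leaves:
  shows "valid1 G arG t \<Longrightarrow> length us = nleaves t \<Longrightarrow> \<forall>u\<in>set us. valid1 G arG u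
      \<Longrightarrow> valid1 G arG (fill_leaves t us)"
    and "\<forall>t\<in>set ts. valid1 G arG t \<Longrightarrow> length us = nleaves_list ts \<Longrightarrow> \<forall>u\<in>set us. valid1 G arG u
      \<Longrightarrow> (\<forall>t\<in>set (fill_leaves_list ts us). valid1 G arG t) \<and> length (fill_leaves_list ts us) = length ts"
proof (induction t us and ts us rule: fill_leaves_fill_leaves_list.induct)
  case (1 c us)
  then show ?case by (cases us) auto
next
  case (2 g ts us)
  have "(\<forall>t\<in>set (fill_leaves_list ts us). valid1 G arG t) \<and> length (fill_leaves_list ts us) = length ts"
    using "2.prems" by (intro "2.IH") simp_all
  then have valid: "\<forall>t\<in>set (fill_leaves_list ts us). valid1 G arG t"
    and len: "length (fill_leaves_list ts us) = length ts"
    by simp_all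
  then have "\<forall>j<length ts. tout (\<lambda>_. Suc 0) (fill_leaves_list ts us ! j) = Suc 0"
    by (metis nth_mem valid1_tout)
  with "2.prems" valid len show ?case
    by simp
next
  case (4 t ts us)
  have take: "\<forall>u\<in>set (take (nleaves t) us). valid1 G arG u"
    and drop: "\<forall>u\<in>set (drop (nleaves t) us). valid1 G arG u"
    using "4.prems"(3) by (meson in_set_dropD in_set_takeD)+
  have "valid1 G arG (fill_leaves t (take (nleaves t) us))"
    by (rule "4.IH"(1)) (use "4.prems" take in simp_all)
  moreover have "(\<forall>t\<in>set (fill_leaves_list ts (drop (nleaves t) us)). valid1 G arG t)
      \<and> length (fill_leaves_list ts (drop (nleaves t) us)) = length ts"
    by (rule "4.IH"(2)) (use "4.prems" drop in simp_all)
  ultimately show ?case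
    by simp
qed simp

lemma fill_leaves_replicate_Leaf:
  "valid1 G arG t \<Longrightarrow> fill_leaves t (replicate (nleaves t) (Leaf 1)) = t"
  using fill_leaves_leaves[of t] valid1_leaf_cols[of G arG t] by simp

lemma nleaves_corolla [simp]: "nleaves (corolla C x) = ar C x"
  by (simp add: corolla_def sum_list_replicate)

lemma valid1_corolla: "x \<in> X \<Longrightarrow> valid1 X (ar C) (corolla C x)"
  by (simp add: corolla_def)

section \<open>Congruences and quotients\<close>

lemma is_congruenceD:
  assumes "is_congruence Op E"
  shows "equiv (elems Op) E"
    and "(x, y) \<in> E \<Longrightarrow> ar Op x = ar Op y"
    and "(x, y) \<in> E \<Longrightarrow> outc Op x = outc Op y"
    and "(x, y) \<in> E \<Longrightarrow> i \<in> {1..ar Op x} \<Longrightarrow> inc Op x i = inc Op y i"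
    and "(x, x') \<in> E \<Longrightarrow> (y, y') \<in> E \<Longrightarrow> comp_defined Op x i y \<Longrightarrow>
      (pcomp Op x i y, pcomp Op x' i y') \<in> E"
  using assms unfolding is_congruence_def by blast+

lemma congruence_refl: "is_congruence Op E \<Longrightarrow> a \<in> elems Op \<Longrightarrow> (a, a) \<in> E"
  using is_congruenceD(1) by (fastforce simp: equiv_def refl_on_def)

lemma congruence_sym: "is_congruence Op E \<Longrightarrow> (a, b) \<in> E \<Longrightarrow> (b, a) \<in> E"
  using is_congruenceD(1) by (fastforce simp: equiv_def sym_def)

lemma congruence_trans: "is_congruence Op E \<Longrightarrow> (a, b) \<in> E \<Longrightarrow> (b, c) \<in> E \<Longrightarrow> (a, c) \<in> E"
  using is_congruenceD(1) unfolding equiv_def trans_def by blast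

lemma comp_defined_congruent:
  assumes "is_congruence Op E" "(x, x') \<in> E" "(y, y') \<in> E" "comp_defined Op x i y"
  shows "comp_defined Op x' i y'"
proof -
  have "x' \<in> elems Op" "y' \<in> elems Op"
    using equiv_type[OF is_congruenceD(1)[OF assms(1)]] assms(2,3) by blast+
  then show ?thesis
    using assms(4) is_congruenceD(2-4)[OF assms(1)] assms(2,3) by (auto simp: comp_defined_def)
qed

lemma pcomp_in_elems_if_congruence:
  assumes "is_congruence Op E" "comp_defined Op x i y"
  shows "pcomp Op x i y \<in> elems Op"
proof -
  have "(x, x) \<in> E" "(y, y) \<in> E"
    using assms(2) congruence_refl[OF assms(1)] by (auto simp: comp_defined_def)
  then have "(pcomp Op x i y, pcomp Op x i y) \<in> E"
    using is_congruenceD(5)[OF assms(1) _ _ assms(2)] by blast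
  then show ?thesis
    using equiv_type[OF is_congruenceD(1)[OF assms(1)]] by blast
qed

lemma is_congruence_Inter:
  assumes "\<E> \<noteq> {}" "\<And>E. E \<in> \<E> \<Longrightarrow> is_congruence Op E"
  shows "is_congruence Op (\<Inter>\<E>)"
proof -
  obtain E0 where E0: "E0 \<in> \<E>"
    using assms(1) by blast
  have equivs: "\<And>E. E \<in> \<E> \<Longrightarrow> equiv (elems Op) E"
    using assms(2) is_congruenceD(1) by blast
  have "equiv (elems Op) (\<Inter>\<E>)"
  proof (rule equivI)
    show "\<Inter>\<E> \<subseteq> elems Op \<times> elems Op"
      using equivs[OF E0] E0 by (auto simp: equiv_def)
    show "refl_on (elems Op) (\<Inter>\<E>)"
      using equivs by (auto simp: equiv_def refl_on_def)
    show "sym (\<Inter>\<E>)"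
      using equivs by (auto simp: equiv_def sym_def)
    show "trans (\<Inter>\<E>)"
      using equivs unfolding equiv_def trans_def by blast
  qed
  moreover have "\<forall>(x, y)\<in>\<Inter>\<E>. ar Op x = ar Op y \<and> outc Op x = outc Op y
      \<and> (\<forall>i\<in>{1..ar Op x}. inc Op x i = inc Op y i)"
    using E0 is_congruenceD(2-4)[OF assms(2)[OF E0]] by blast
  moreover have "(pcomp Op x i y, pcomp Op x' i y') \<in> \<Inter>\<E>"
    if "(x, x') \<in> \<Inter>\<E>" "(y, y') \<in> \<Inter>\<E>" "comp_defined Op x i y" for x x' y y' i
    using that is_congruenceD(5)[OF assms(2)] by blast
  ultimately show ?thesis
    unfolding is_congruence_def by blast
qed

lemma cong_gen_eq_Inter: "cong_gen Op R = \<Inter>{E. is_congruence Op E \<and> R \<subseteq> E}"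
  by (auto simp: cong_gen_def)

lemma cong_gen_least: "is_congruence Op E \<Longrightarrow> R \<subseteq> E \<Longrightarrow> cong_gen Op R \<subseteq> E"
  by (auto simp: cong_gen_def)

lemma cong_gen_incl: "R \<subseteq> cong_gen Op R"
  by (auto simp: cong_gen_def)

lemma is_congruence_cong_gen:
  assumes "is_congruence Op P" "R \<subseteq> P"
  shows "is_congruence Op (cong_gen Op R)"
  unfolding cong_gen_eq_Inter using assms by (intro is_congruence_Inter) auto

definition comp_hom :: "'a coloperad \<Rightarrow> 'b coloperad \<Rightarrow> ('a \<Rightarrow> 'b) \<Rightarrow> bool" where
  "comp_hom Op1 Op2 h \<longleftrightarrow> (\<forall>a\<in>elems Op1. h a \<in> elems Op2)
     \<and> (\<forall>a i b. comp_defined Op1 a i b \<longrightarrow>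
          comp_defined Op2 (h a) i (h b) \<and> h (pcomp Op1 a i b) = pcomp Op2 (h a) i (h b))"

lemma is_congruence_inter_preimage:
  assumes h: "comp_hom Op1 Op2 h" and P: "is_congruence Op1 P" and E: "is_congruence Op2 E"
  shows "is_congruence Op1 (P \<inter> {(a, b). (h a, h b) \<in> E})"
proof -
  let ?K = "P \<inter> {(a, b). (h a, h b) \<in> E}"
  have "equiv (elems Op1) ?K"
  proof (rule equivI)
    show "?K \<subseteq> elems Op1 \<times> elems Op1"
      using is_congruenceD(1)[OF P] by (auto simp: equiv_def)
    show "refl_on (elems Op1) ?K"
      using h congruence_refl[OF P] congruence_refl[OF E] by (auto simp: comp_hom_def refl_on_def)
    show "sym ?K"
      using congruence_sym[OF P] congruence_sym[OF E] by (auto simp: sym_def)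
    show "trans ?K"
      using congruence_trans[OF P] congruence_trans[OF E] unfolding trans_def by blast
  qed
  moreover have "(pcomp Op1 x i y, pcomp Op1 x' i y') \<in> ?K"
    if K: "(x, x') \<in> ?K" "(y, y') \<in> ?K" and xy: "comp_defined Op1 x i y" for x x' y y' i
  proof -
    have x'y': "comp_defined Op1 x' i y'"
      using comp_defined_congruent[OF P _ _ xy] K by blast
    have "(pcomp Op2 (h x) i (h y), pcomp Op2 (h x') i (h y')) \<in> E"
      using is_congruenceD(5)[OF E] K h xy by (auto simp: comp_hom_def)
    then show ?thesis
      using is_congruenceD(5)[OF P] K h xy x'y' by (auto simp: comp_hom_def)
  qed
  ultimately show ?thesis
    using P unfolding is_congruence_def by blast
qed

lemma cong_gen_preimage:
  assumes "comp_hom Op1 Op2 h" "is_congruence Op1 P" "R \<subseteq> P" "is_congruence Op2 E"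
    and "\<And>a b. (a, b) \<in> R \<Longrightarrow> (h a, h b) \<in> E"
    and "(a, b) \<in> cong_gen Op1 R"
  shows "(h a, h b) \<in> E"
proof -
  have "cong_gen Op1 R \<subseteq> P \<inter> {(a, b). (h a, h b) \<in> E}"
    using assms(3,5) by (intro cong_gen_least[OF is_congruence_inter_preimage[OF assms(1,2,4)]]) auto
  with assms(6) show ?thesis
    by blast
qed

lemma is_congruence_free_profile:
  "is_congruence (free_op G arG outG inG k)
     {(a, b). valid_tree k G arG outG inG a \<and> valid_tree k G arG outG inG b
        \<and> leaf_cols a = leaf_cols b \<and> tout outG a = tout outG b}"
  (is "is_congruence ?F ?P")
proof -
  have same_nleaves: "nleaves a = nleaves b" if "(a, b) \<in> ?P" for a b
    using that by (metis (mono_tags, lifting) case_prodD length_leaf_cols mem_Collect_eq)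
  have "equiv (elems ?F) ?P"
    by (auto simp: equiv_def refl_on_def sym_def trans_def)
  moreover have "(pcomp ?F x i y, pcomp ?F x' i y') \<in> ?P"
    if P: "(x, x') \<in> ?P" "(y, y') \<in> ?P" and xy: "comp_defined ?F x i y" for x x' y y' i
  proof -
    have x'y': "comp_defined ?F x' i y'"
      using P xy same_nleaves[OF P(1)] by (simp add: comp_defined_free)
    have "valid_tree k G arG outG inG (graft x i y) \<and> tout outG (graft x i y) = tout outG x"
      using xy unfolding comp_defined_free by (intro valid_graft(1)) simp_all
    moreover have "valid_tree k G arG outG inG (graft x' i y') \<and> tout outG (graft x' i y') = tout outG x'"
      using x'y' unfolding comp_defined_free by (intro valid_graft(1)) simp_all
    moreover have "leaf_cols (graft x i y) = leaf_cols (graft x' i y')"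
      using xy x'y' P unfolding comp_defined_free by (simp add: leaf_cols_graft)
    ultimately show ?thesis
      using P by (simp add: free_op_def)
  qed
  moreover have "ar ?F a = ar ?F b \<and> outc ?F a = outc ?F b \<and> (\<forall>i\<in>{1..ar ?F a}. inc ?F a i = inc ?F b i)"
    if "(a, b) \<in> ?P" for a b
    using that same_nleaves[OF that] by (simp add: free_op_def)
  ultimately show ?thesis
    unfolding is_congruence_def by blast
qed

lemma is_congruence_free1_profile:
  "is_congruence (free_op1 G arG) {(a, b). valid1 G arG a \<and> valid1 G arG b \<and> nleaves a = nleaves b}"
proof -
  have same: "leaf_cols a = leaf_cols b \<longleftrightarrow> nleaves a = nleaves b" if "valid1 G arG a" "valid1 G arG b" for a b
    using valid1_leaf_cols[OF that(1)] valid1_leaf_cols[OF that(2)] length_leaf_cols by metis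
  have "{(a, b). valid1 G arG a \<and> valid1 G arG b \<and> leaf_cols a = leaf_cols b
      \<and> tout (\<lambda>_. Suc 0) a = tout (\<lambda>_. Suc 0) b}
    = {(a, b). valid1 G arG a \<and> valid1 G arG b \<and> nleaves a = nleaves b}"
    using same valid1_tout[of G arG] by auto
  then show ?thesis
    using is_congruence_free_profile[of G arG "\<lambda>_. Suc 0" "\<lambda>_ _. Suc 0" "Suc 0"] by simp
qed

lemma congruence_free1_nleaves:
  assumes "is_congruence (free_op1 G arG) E" "(a, b) \<in> E"
  shows "valid1 G arG a" "valid1 G arG b" "nleaves a = nleaves b"
  using is_congruenceD(2)[OF assms] equiv_type[OF is_congruenceD(1)[OF assms(1)]] assms(2)
  by (auto simp: free_op_def)

lemma congruence_free1_graft: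
  assumes "is_congruence (free_op1 G arG) E" "(x, x') \<in> E" "(y, y') \<in> E" "1 \<le> i" "i \<le> nleaves x"
  shows "(graft x i y, graft x' i y') \<in> E"
proof -
  have "comp_defined (free_op1 G arG) x i y"
    using congruence_free1_nleaves(1)[OF assms(1,2)] congruence_free1_nleaves(1)[OF assms(1,3)] assms(4,5)
    by (simp add: comp_defined_free1)
  then show ?thesis
    using is_congruenceD(5)[OF assms(1-3)] by (simp add: free_op_def)
qed

text \<open>The leaves are filled one at a time, each step being a single grafting.\<close>

lemma fill_leaves_congruent:
  assumes E: "is_congruence (free_op1 G arG) E" and AB: "(A, B) \<in> E"
    and len: "length us = nleaves A" and uv: "list_all2 (\<lambda>u v. (u, v) \<in> E) us vs"
  shows "(fill_leaves A us, fill_leaves B vs) \<in> E"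
proof -
  define n where "n = nleaves A"
  have vA: "valid1 G arG A" and vB: "valid1 G arG B" and nB: "nleaves B = n"
    using congruence_free1_nleaves[OF E AB] n_def by simp_all
  have lv: "length vs = n"
    using list_all2_lengthD[OF uv] len n_def by simp
  have same_pos: "nleaves_list (take j us) = nleaves_list (take j vs)" for j
    using uv congruence_free1_nleaves(3)[OF E]
    by (intro nleaves_list_list_all2 list_all2_takeI) (auto elim: list_all2_mono)
  let ?ws = "\<lambda>us j. take j us @ replicate (n - j) (Leaf 1)"
  have "(fill_leaves A (?ws us j), fill_leaves B (?ws vs j)) \<in> E" if "j \<le> n" for j
    using that
  proof (induction j)
    case 0
    then show ?case
      using AB fill_leaves_replicate_Leaf[OF vA] fill_leaves_replicate_Leaf[OF vB] nB
      by (simp add: n_def)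
  next
    case (Suc j)
    then have j: "j < n"
      by simp
    let ?p = "nleaves_list (take j us) + 1"
    have "nleaves (fill_leaves A (?ws us j)) = nleaves_list (take j us) + (n - j)"
      using len j n_def by (simp add: nleaves_fill_leaves sum_list_replicate)
    moreover have "(us ! j, vs ! j) \<in> E"
      using list_all2_nthD[OF uv] j len n_def by simp
    ultimately have "(graft (fill_leaves A (?ws us j)) ?p (us ! j), graft (fill_leaves B (?ws vs j)) ?p (vs ! j)) \<in> E"
      using congruence_free1_graft[OF E Suc.IH[OF less_imp_le[OF j]]] j by simp
    then show ?case
      using fill_leaves_take_Suc[OF len[folded n_def] j n_def[symmetric]]
        fill_leaves_take_Suc[OF lv j nB] same_pos[of j]
      by simp
  qed
  from this[of n] show ?thesis
    using len lv n_def by simp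
qed

abbreviation class_rep :: "'a set \<Rightarrow> 'a" where
  "class_rep X \<equiv> SOME x. x \<in> X"

lemma class_rep_rel:
  assumes "equiv A E" "a \<in> A"
  shows "(a, class_rep (E `` {a})) \<in> E"
proof -
  have "a \<in> E `` {a}"
    by (rule equiv_class_self[OF assms])
  then have "class_rep (E `` {a}) \<in> E `` {a}"
    by (rule someI)
  then show ?thesis
    by simp
qed

lemma class_rep:
  assumes "equiv A E" "X \<in> A // E"
  shows "class_rep X \<in> A" "X = E `` {class_rep X}"
proof -
  obtain a where a: "a \<in> A" "X = E `` {a}"
    using assms(2) by (rule quotientE)
  have rel: "(a, class_rep X) \<in> E"
    using class_rep_rel[OF assms(1) a(1)] a(2) by simp
  then show "class_rep X \<in> A"
    using equiv_type[OF assms(1)] by blast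
  show "X = E `` {class_rep X}"
    using equiv_class_eq[OF assms(1) rel] unfolding a(2)[symmetric] .
qed

lemma quot_op_profile:
  assumes "is_congruence Op E" "a \<in> elems Op"
  shows "ar (quot_op Op E) (E `` {a}) = ar Op a"
    and "outc (quot_op Op E) (E `` {a}) = outc Op a"
    and "i \<in> {1..ar Op a} \<Longrightarrow> inc (quot_op Op E) (E `` {a}) i = inc Op a i"
  using is_congruenceD(2-4)[OF assms(1) class_rep_rel[OF is_congruenceD(1)[OF assms(1)] assms(2)]]
  by (simp_all add: quot_op_def)

lemma quot_op_pcomp:
  assumes "is_congruence Op E" "comp_defined Op a i b"
  shows "pcomp (quot_op Op E) (E `` {a}) i (E `` {b}) = E `` {pcomp Op a i b}"
proof -
  have eq: "equiv (elems Op) E"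
    by (rule is_congruenceD(1)[OF assms(1)])
  have "a \<in> elems Op" "b \<in> elems Op"
    using assms(2) by (auto simp: comp_defined_def)
  then have "(pcomp Op a i b, pcomp Op (class_rep (E `` {a})) i (class_rep (E `` {b}))) \<in> E"
    using is_congruenceD(5)[OF assms(1) _ _ assms(2)] class_rep_rel[OF eq] by blast
  then show ?thesis
    using equiv_class_eq[OF eq] by (simp add: quot_op_def)
qed

lemma comp_defined_quot_op:
  assumes "is_congruence Op E" "comp_defined (quot_op Op E) X i Y"
  shows "X \<in> elems Op // E" "Y \<in> elems Op // E" "comp_defined Op (class_rep X) i (class_rep Y)"
  using assms(2) class_rep(1)[OF is_congruenceD(1)[OF assms(1)]]
  by (auto simp: comp_defined_def quot_op_def)

definition quot_map :: "('a \<Rightarrow> 'b) \<Rightarrow> 'b rel \<Rightarrow> 'a set \<Rightarrow> 'b set" where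
  "quot_map h E X = E `` {h (class_rep X)}"

lemma quot_map_class:
  assumes "equiv A E1" "equiv B E2" "\<And>a b. (a, b) \<in> E1 \<Longrightarrow> (h a, h b) \<in> E2" "a \<in> A"
  shows "quot_map h E2 (E1 `` {a}) = E2 `` {h a}"
  unfolding quot_map_def using assms(3)[OF class_rep_rel[OF assms(1,4)]] equiv_class_eq[OF assms(2)]
  by metis

lemma bij_betw_quot_map:
  assumes eq1: "equiv A E1" and eq2: "equiv B E2"
    and h: "\<And>a. a \<in> A \<Longrightarrow> h a \<in> B" and h_resp: "\<And>a b. (a, b) \<in> E1 \<Longrightarrow> (h a, h b) \<in> E2"
    and g: "\<And>b. b \<in> B \<Longrightarrow> g b \<in> A" and g_resp: "\<And>a b. (a, b) \<in> E2 \<Longrightarrow> (g a, g b) \<in> E1"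
    and gh: "\<And>a. a \<in> A \<Longrightarrow> (g (h a), a) \<in> E1" and hg: "\<And>b. b \<in> B \<Longrightarrow> (h (g b), b) \<in> E2"
  shows "bij_betw (quot_map h E2) (A // E1) (B // E2)"
proof -
  have on_class: "quot_map h E2 (E1 `` {a}) = E2 `` {h a}" if "a \<in> A" for a
    by (intro quot_map_class[OF eq1 eq2 _ that] h_resp)
  have "inj_on (quot_map h E2) (A // E1)"
  proof (rule inj_onI)
    fix X Y
    assume "X \<in> A // E1" "Y \<in> A // E1" "quot_map h E2 X = quot_map h E2 Y"
    then obtain a b where ab: "a \<in> A" "b \<in> A" "X = E1 `` {a}" "Y = E1 `` {b}"
      and "E2 `` {h a} = E2 `` {h b}"
      using on_class by (metis quotientE)
    then have "(h a, h b) \<in> E2"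
      using eq_equiv_class_iff[OF eq2] h by blast
    then have "(a, b) \<in> E1"
      using g_resp gh ab(1,2) eq1 by (meson equiv_def symD transD)
    then show "X = Y"
      using ab(3,4) equiv_class_eq[OF eq1] by simp
  qed
  moreover have "quot_map h E2 ` (A // E1) = B // E2"
  proof (intro equalityI subsetI)
    fix Z
    assume "Z \<in> quot_map h E2 ` (A // E1)"
    then obtain a where "a \<in> A" "Z = E2 `` {h a}"
      using on_class by (auto elim!: quotientE)
    then show "Z \<in> B // E2"
      using h by (simp add: quotientI)
  next
    fix Z
    assume "Z \<in> B // E2"
    then obtain b where b: "b \<in> B" "Z = E2 `` {b}"
      by (rule quotientE)
    then have "Z = quot_map h E2 (E1 `` {g b})"
      using on_class g hg equiv_class_eq[OF eq2] by metis
    then show "Z \<in> quot_map h E2 ` (A // E1)"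
      using g[OF b(1)] by (auto intro: quotientI)
  qed
  ultimately show ?thesis
    by (simp add: bij_betw_def)
qed

lemma quot_map_pcomp:
  assumes E1: "is_congruence Op1 E1" and E2: "is_congruence Op2 E2" and h: "comp_hom Op1 Op2 h"
    and h_resp: "\<And>a b. (a, b) \<in> E1 \<Longrightarrow> (h a, h b) \<in> E2"
    and XY: "comp_defined (quot_op Op1 E1) X i Y"
  shows "quot_map h E2 (pcomp (quot_op Op1 E1) X i Y) =
    pcomp (quot_op Op2 E2) (quot_map h E2 X) i (quot_map h E2 Y)"
proof -
  have eq1: "equiv (elems Op1) E1" and eq2: "equiv (elems Op2) E2"
    using is_congruenceD(1)[OF E1] is_congruenceD(1)[OF E2] .
  have on_class: "quot_map h E2 (E1 `` {a}) = E2 `` {h a}" if "a \<in> elems Op1" for a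
    by (intro quot_map_class[OF eq1 eq2 _ that] h_resp)
  let ?a = "class_rep X" and ?b = "class_rep Y"
  have X: "X = E1 `` {?a}" and Y: "Y = E1 `` {?b}" and ab: "comp_defined Op1 ?a i ?b"
    using comp_defined_quot_op[OF E1 XY] class_rep(2)[OF eq1] by blast+
  have "quot_map h E2 (pcomp (quot_op Op1 E1) X i Y) = E2 `` {h (pcomp Op1 ?a i ?b)}"
    using on_class pcomp_in_elems_if_congruence[OF E1 ab] by (simp add: quot_op_def)
  also have "\<dots> = pcomp (quot_op Op2 E2) (E2 `` {h ?a}) i (E2 `` {h ?b})"
    using h ab quot_op_pcomp[OF E2] by (simp add: comp_hom_def)
  also have "\<dots> = pcomp (quot_op Op2 E2) (quot_map h E2 X) i (quot_map h E2 Y)"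
    using on_class ab X Y by (metis comp_defined_def)
  finally show ?thesis .
qed

lemma isomorphic_quot_op:
  assumes E1: "is_congruence Op1 E1" and E2: "is_congruence Op2 E2"
    and h: "comp_hom Op1 Op2 h"
    and h_profile: "\<And>a. a \<in> elems Op1 \<Longrightarrow> ar Op2 (h a) = ar Op1 a \<and> outc Op2 (h a) = outc Op1 a
        \<and> (\<forall>i\<in>{1..ar Op1 a}. inc Op2 (h a) i = inc Op1 a i)"
    and h_unit: "\<And>c. c \<in> {1..k} \<Longrightarrow> unit Op1 c \<in> elems Op1 \<and> h (unit Op1 c) = unit Op2 c"
    and h_resp: "\<And>a b. (a, b) \<in> E1 \<Longrightarrow> (h a, h b) \<in> E2"
    and g: "\<And>b. b \<in> elems Op2 \<Longrightarrow> g b \<in> elems Op1"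
    and g_resp: "\<And>a b. (a, b) \<in> E2 \<Longrightarrow> (g a, g b) \<in> E1"
    and gh: "\<And>a. a \<in> elems Op1 \<Longrightarrow> (g (h a), a) \<in> E1"
    and hg: "\<And>b. b \<in> elems Op2 \<Longrightarrow> (h (g b), b) \<in> E2"
  shows "isomorphic k (quot_op Op1 E1) (quot_op Op2 E2)"
proof -
  have eq1: "equiv (elems Op1) E1" and eq2: "equiv (elems Op2) E2"
    using is_congruenceD(1)[OF E1] is_congruenceD(1)[OF E2] .
  have h_elems: "h a \<in> elems Op2" if "a \<in> elems Op1" for a
    using h that by (simp add: comp_hom_def)
  have on_class: "quot_map h E2 (E1 `` {a}) = E2 `` {h a}" if "a \<in> elems Op1" for a
    by (intro quot_map_class[OF eq1 eq2 _ that] h_resp)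
  let ?f = "quot_map h E2"
  have bij: "bij_betw ?f (elems (quot_op Op1 E1)) (elems (quot_op Op2 E2))"
    using bij_betw_quot_map[OF eq1 eq2 h_elems h_resp g g_resp gh hg] by (simp add: quot_op_def)
  have profile: "ar (quot_op Op2 E2) (?f X) = ar (quot_op Op1 E1) X
      \<and> outc (quot_op Op2 E2) (?f X) = outc (quot_op Op1 E1) X
      \<and> (\<forall>i\<in>{1..ar (quot_op Op1 E1) X}. inc (quot_op Op2 E2) (?f X) i = inc (quot_op Op1 E1) X i)"
    if "X \<in> elems (quot_op Op1 E1)" for X
  proof -
    have "X \<in> elems Op1 // E1"
      using that by (simp add: quot_op_def)
    then obtain a where a: "a \<in> elems Op1" "X = E1 `` {a}"
      by (rule quotientE)
    then show ?thesis
      using on_class[OF a(1)] quot_op_profile[OF E1 a(1)] quot_op_profile[OF E2 h_elems[OF a(1)]]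
        h_profile[OF a(1)] by simp
  qed
  have comp: "?f (pcomp (quot_op Op1 E1) X i Y) = pcomp (quot_op Op2 E2) (?f X) i (?f Y)"
    if "comp_defined (quot_op Op1 E1) X i Y" for X i Y
    by (intro quot_map_pcomp[OF E1 E2 h _ that] h_resp)
  have unit: "?f (unit (quot_op Op1 E1) c) = unit (quot_op Op2 E2) c" if "c \<in> {1..k}" for c
    using on_class h_unit[OF that] by (simp add: quot_op_def)
  have "is_iso k (quot_op Op1 E1) (quot_op Op2 E2) ?f"
    unfolding is_iso_def using bij profile comp unit by blast
  then show ?thesis
    unfolding isomorphic_def by blast
qed

section \<open>Substituting trees for nodes\<close>

fun expand :: "('a \<Rightarrow> 'g stree) \<Rightarrow> 'a stree \<Rightarrow> 'g stree" where
  "expand \<sigma> (Leaf c) = Leaf 1"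
| "expand \<sigma> (Node x ts) = fill_leaves (\<sigma> x) (map (expand \<sigma>) ts)"

lemma expand_corolla:
  "valid1 G arG (\<sigma> x) \<Longrightarrow> nleaves (\<sigma> x) = ar C x \<Longrightarrow> expand \<sigma> (corolla C x) = \<sigma> x"
  using fill_leaves_replicate_Leaf[of G arG "\<sigma> x"] by (simp add: corolla_def)

context
  fixes X :: "'a set" and arX :: "'a \<Rightarrow> nat" and G :: "'g set" and arG :: "'g \<Rightarrow> nat"
    and \<sigma> :: "'a \<Rightarrow> 'g stree"
  assumes \<sigma>: "\<And>x. x \<in> X \<Longrightarrow> valid1 G arG (\<sigma> x) \<and> nleaves (\<sigma> x) = arX x"
begin

lemma valid1_expand: "valid1 X arX t \<Longrightarrow> valid1 G arG (expand \<sigma> t) \<and> nleaves (expand \<sigma> t) = nleaves t"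
proof (induction t)
  case (Node x ts)
  then have IH: "\<forall>t\<in>set ts. valid1 G arG (expand \<sigma> t) \<and> nleaves (expand \<sigma> t) = nleaves t"
    by auto
  have len: "length (map (expand \<sigma>) ts) = nleaves (\<sigma> x)"
    using Node.prems \<sigma> by simp
  have "nleaves_list (map (expand \<sigma>) ts) = nleaves_list ts"
    using IH by (induction ts) auto
  then show ?case
    using valid1_fill_leaves(1)[OF _ len] nleaves_fill_leaves[OF len] IH \<sigma> Node.prems by auto
qed simp

lemma expand_graft: "valid1 X arX t \<Longrightarrow> expand \<sigma> (graft t i s) = graft (expand \<sigma> t) i (expand \<sigma> s)"
proof (induction t arbitrary: i)
  case (Node x ts)
  have valid: "\<forall>t\<in>set ts. valid1 X arX t"
    using Node.prems by simp
  with Node.IH have "\<forall>t\<in>set ts. \<forall>i. expand \<sigma> (graft t i s) = graft (expand \<sigma> t) i (expand \<sigma> s)"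
    by blast
  with valid have "map (expand \<sigma>) (graft_list ts i s) = graft_list (map (expand \<sigma>) ts) i (expand \<sigma> s)"
    by (induction ts arbitrary: i) (auto simp: valid1_expand[THEN conjunct2])
  moreover have "length (map (expand \<sigma>) ts) = nleaves (\<sigma> x)"
    using Node.prems \<sigma> by simp
  ultimately show ?case
    using graft_fill_leaves(1)[of "map (expand \<sigma>) ts" "\<sigma> x" i "expand \<sigma> s"] by simp
qed simp

lemma comp_hom_expand: "comp_hom (free_op1 X arX) (free_op1 G arG) (expand \<sigma>)"
  unfolding comp_hom_def comp_defined_free1
  using valid1_expand expand_graft by (auto simp: free_op_def valid1_graft)

end

section \<open>The enveloping operad of a presented coloured operad\<close>

locale presented_coloperad =
  fixes k :: nat and C :: "'a coloperad" and G :: "'g set" and arG :: "'g \<Rightarrow> nat"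
    and outG :: "'g \<Rightarrow> nat" and inG :: "'g \<Rightarrow> nat \<Rightarrow> nat" and R :: "'g stree rel"
    and f0 :: "'a \<Rightarrow> 'g stree set"
  assumes coloperad: "is_coloperad k C"
    and collection: "is_collection k G arG outG inG"
    and presentation: "admits_presentation k C G arG outG inG R"
    and iso: "is_iso k C (quot_op (free_op G arG outG inG k) (cong_gen (free_op G arG outG inG k) R)) f0"
begin

abbreviation "F \<equiv> free_op G arG outG inG k"
abbreviation "E \<equiv> cong_gen F R"
abbreviation "valid \<equiv> valid_tree k G arG outG inG"
abbreviation "R' \<equiv> {(forget S, forget T) | S T. (S, T) \<in> R}"
abbreviation "E' \<equiv> cong_gen (free_op1 G arG) R'"
abbreviation "Ee \<equiv> cong_gen (free_op1 (Cplus C) (ar C)) (env_rel C)"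

lemma R_profile:
  assumes "(S, T) \<in> R"
  shows "valid S" "valid T" "leaf_cols S = leaf_cols T" "tout outG S = tout outG T"
proof -
  have "valid S" "valid T" and same: "nleaves S = nleaves T" "tout outG S = tout outG T"
    and cols: "\<forall>i\<in>{1..nleaves S}. leaf_cols S ! (i - 1) = leaf_cols T ! (i - 1)"
    using presentation assms unfolding admits_presentation_def Let_def by (auto simp: free_op_def)
  moreover have "leaf_cols S = leaf_cols T"
  proof (rule nth_equalityI)
    fix i
    assume "i < length (leaf_cols S)"
    then show "leaf_cols S ! i = leaf_cols T ! i"
      using cols[rule_format, of "Suc i"] by simp
  qed (simp add: same)
  ultimately show "valid S" "valid T" "leaf_cols S = leaf_cols T" "tout outG S = tout outG T"
    by simp_all
qed

lemma E_congruence: "is_congruence F E"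
  using R_profile by (intro is_congruence_cong_gen[OF is_congruence_free_profile]) auto

lemma R'_profile: "R' \<subseteq> {(a, b). valid1 G arG a \<and> valid1 G arG b \<and> nleaves a = nleaves b}"
proof clarify
  fix S T
  assume "(S, T) \<in> R"
  then show "valid1 G arG (forget S) \<and> valid1 G arG (forget T) \<and> nleaves (forget S) = nleaves (forget T)"
    using R_profile[of S T] valid1_forget by (metis length_leaf_cols nleaves_forget)
qed

lemma E'_congruence: "is_congruence (free_op1 G arG) E'"
  by (rule is_congruence_cong_gen[OF is_congruence_free1_profile R'_profile])

lemma comp_hom_forget: "comp_hom F (free_op1 G arG) forget"
  unfolding comp_hom_def comp_defined_free1 comp_defined_free
  by (auto simp: valid1_forget forget_graft free_op_def leaf_cols_forget)

lemma forget_respects_E: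
  assumes "(S, T) \<in> E"
  shows "(forget S, forget T) \<in> E'"
proof (rule cong_gen_preimage[OF comp_hom_forget is_congruence_free_profile _ E'_congruence _ assms])
  show "R \<subseteq> {(a, b). valid a \<and> valid b \<and> leaf_cols a = leaf_cols b \<and> tout outG a = tout outG b}"
    using R_profile by fastforce
  show "(forget a, forget b) \<in> E'" if "(a, b) \<in> R" for a b
    using that by (intro subsetD[OF cong_gen_incl]) blast
qed

lemma iso_bij: "bij_betw f0 (elems C) (elems F // E)"
  using iso by (simp add: is_iso_def quot_op_def)

lemma pcomp_C:
  "comp_defined C x i y \<Longrightarrow> pcomp C x i y \<in> elems C \<and> ar C (pcomp C x i y) = ar C x + ar C y - 1"
  using coloperad by (simp add: is_coloperad_def)

definition rep :: "'a \<Rightarrow> 'g stree" where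
  "rep x = class_rep (f0 x)"

lemma rep:
  assumes "x \<in> elems C"
  shows "valid (rep x)" "f0 x = E `` {rep x}"
proof -
  have "f0 x \<in> elems F // E"
    using bij_betwE[OF iso_bij] assms by blast
  then show "valid (rep x)" "f0 x = E `` {rep x}"
    using class_rep[OF is_congruenceD(1)[OF E_congruence]] by (auto simp: rep_def)
qed

lemma nleaves_rep: "x \<in> elems C \<Longrightarrow> nleaves (rep x) = ar C x"
  using iso by (simp add: is_iso_def quot_op_def free_op_def rep_def)

lemma rep_pcomp:
  assumes "comp_defined C x i y"
  shows "(graft (rep x) i (rep y), rep (pcomp C x i y)) \<in> E"
proof -
  have "E `` {rep (pcomp C x i y)} = f0 (pcomp C x i y)"
    using rep(2) pcomp_C[OF assms] by simp
  also have "\<dots> = E `` {graft (rep x) i (rep y)}"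
    using iso assms by (simp add: is_iso_def quot_op_def free_op_def rep_def)
  finally show ?thesis
    using rep(1) pcomp_C[OF assms] congruence_refl[OF E_congruence] by (metis Image_singleton_iff elems_free_op)
qed

definition eval :: "'g stree \<Rightarrow> 'a" where
  "eval S = inv_into (elems C) f0 (E `` {S})"

lemma eval:
  assumes "valid S"
  shows "eval S \<in> elems C" "f0 (eval S) = E `` {S}"
proof -
  have "E `` {S} \<in> elems F // E"
    using assms by (intro quotientI) simp
  then show "eval S \<in> elems C" "f0 (eval S) = E `` {S}"
    using iso_bij unfolding eval_def by (auto simp: bij_betw_def inv_into_into f_inv_into_f)
qed

lemma eval_eqI: "x \<in> elems C \<Longrightarrow> f0 x = E `` {S} \<Longrightarrow> eval S = x"
  unfolding eval_def using iso_bij by (metis bij_betw_imp_inj_on inv_into_f_f)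

lemma eval_rep: "x \<in> elems C \<Longrightarrow> eval (rep x) = x"
  using eval_eqI rep(2) by blast

lemma eval_eq: "(S, T) \<in> E \<Longrightarrow> eval S = eval T"
  unfolding eval_def using equiv_class_eq[OF is_congruenceD(1)[OF E_congruence]] by metis

lemma eval_profile:
  assumes "valid S"
  shows "ar C (eval S) = nleaves S" "outc C (eval S) = tout outG S"
    "i \<in> {1..nleaves S} \<Longrightarrow> inc C (eval S) i = leaf_cols S ! (i - 1)"
  using iso eval[OF assms] quot_op_profile[OF E_congruence, of S] assms
  by (auto simp: is_iso_def free_op_def)

lemma eval_graft:
  assumes "comp_defined F A p B"
  shows "comp_defined C (eval A) p (eval B)" "eval (graft A p B) = pcomp C (eval A) p (eval B)"
proof -
  have A: "valid A" and B: "valid B" and p: "1 \<le> p" "p \<le> nleaves A"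
    and col: "leaf_cols A ! (p - 1) = tout outG B"
    using assms by (simp_all add: comp_defined_free)
  show cd: "comp_defined C (eval A) p (eval B)"
    unfolding comp_defined_def using eval[OF A] eval[OF B] eval_profile[OF A] eval_profile[OF B] p col
    by simp
  have "f0 (pcomp C (eval A) p (eval B)) = pcomp (quot_op F E) (E `` {A}) p (E `` {B})"
    using iso cd eval(2)[OF A] eval(2)[OF B] by (simp add: is_iso_def)
  also have "\<dots> = E `` {graft A p B}"
    using quot_op_pcomp[OF E_congruence assms] by (simp add: free_op_def)
  finally show "eval (graft A p B) = pcomp C (eval A) p (eval B)"
    using eval_eqI pcomp_C[OF cd] by blast
qed

lemma valid_Node_nleaves:
  assumes "valid (Node g ts)"
  shows "2 \<le> nleaves (Node g ts)"
  using valid_tree_nleaves_ge[OF _ assms] collection unfolding is_collection_def by blast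

lemma eval_Cplus: "valid (Node g ts) \<Longrightarrow> eval (Node g ts) \<in> Cplus C"
  using eval(1) eval_profile(1) valid_Node_nleaves by (simp add: Cplus_def)

definition coloured_corolla :: "'g \<Rightarrow> 'g stree" where
  "coloured_corolla g = Node g (map (\<lambda>i. Leaf (inG g (Suc i))) [0..<arG g])"

lemma valid_coloured_corolla: "g \<in> G \<Longrightarrow> valid (coloured_corolla g)"
  using collection unfolding coloured_corolla_def is_collection_def by auto

lemma nleaves_coloured_corolla [simp]: "nleaves (coloured_corolla g) = arG g"
  by (simp add: coloured_corolla_def o_def sum_list_triv)

lemma forget_coloured_corolla: "forget (coloured_corolla g) = Node g (replicate (arG g) (Leaf 1))"
  by (simp add: coloured_corolla_def o_def map_replicate_const)

definition gen_elem :: "'g \<Rightarrow> 'a" where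
  "gen_elem g = eval (coloured_corolla g)"

lemma gen_elem:
  assumes "g \<in> G"
  shows "gen_elem g \<in> Cplus C \<and> ar C (gen_elem g) = arG g"
proof -
  have "valid (coloured_corolla g)"
    using valid_coloured_corolla[OF assms] .
  then show ?thesis
    using eval_Cplus eval_profile(1) unfolding gen_elem_def
    by (metis coloured_corolla_def nleaves_coloured_corolla)
qed

lemma Env_eq: "Env C = quot_op (free_op1 (Cplus C) (ar C)) Ee"
  by (simp add: Env_def env_free_def)

lemma pcomp_Cplus:
  "x \<in> Cplus C \<Longrightarrow> y \<in> Cplus C \<Longrightarrow> comp_defined C x i y \<Longrightarrow>
     pcomp C x i y \<in> Cplus C \<and> ar C (pcomp C x i y) = ar C x + ar C y - 1"
  using pcomp_C by (auto simp: Cplus_def)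

lemma env_rel_profile:
  "env_rel C \<subseteq> {(a, b). valid1 (Cplus C) (ar C) a \<and> valid1 (Cplus C) (ar C) b \<and> nleaves a = nleaves b}"
proof clarify
  fix a b
  assume "(a, b) \<in> env_rel C"
  then obtain x i y where ab: "a = graft (corolla C x) i (corolla C y)" "b = corolla C (pcomp C x i y)"
    and xy: "x \<in> Cplus C" "y \<in> Cplus C" "comp_defined C x i y"
    unfolding env_rel_def by blast
  have i: "1 \<le> i" "i \<le> nleaves (corolla C x)"
    using xy(3) by (simp_all add: comp_defined_def)
  show "valid1 (Cplus C) (ar C) a \<and> valid1 (Cplus C) (ar C) b \<and> nleaves a = nleaves b"
    using ab valid1_graft[OF valid1_corolla[OF xy(1)] valid1_corolla[OF xy(2)] i]
      valid1_corolla[OF conjunct1[OF pcomp_Cplus[OF xy]]] pcomp_Cplus[OF xy] nleaves_graft[OF i]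
    by simp
qed

lemma Ee_congruence: "is_congruence (free_op1 (Cplus C) (ar C)) Ee"
  by (rule is_congruence_cong_gen[OF is_congruence_free1_profile env_rel_profile])

abbreviation to_gens :: "'a stree \<Rightarrow> 'g stree" where
  "to_gens \<equiv> expand (\<lambda>x. forget (rep x))"

abbreviation to_env :: "'g stree \<Rightarrow> 'a stree" where
  "to_env \<equiv> relabel gen_elem"

lemma forget_rep: "x \<in> Cplus C \<Longrightarrow> valid1 G arG (forget (rep x)) \<and> nleaves (forget (rep x)) = ar C x"
  using rep(1) nleaves_rep by (auto intro: valid1_forget simp: Cplus_def)

lemma valid1_to_gens:
  "valid1 (Cplus C) (ar C) a \<Longrightarrow> valid1 G arG (to_gens a) \<and> nleaves (to_gens a) = nleaves a"
  by (rule valid1_expand[OF forget_rep])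

lemma to_gens_corolla: "x \<in> Cplus C \<Longrightarrow> to_gens (corolla C x) = forget (rep x)"
  using forget_rep by (intro expand_corolla) auto

lemma to_gens_respects:
  assumes "(a, b) \<in> Ee"
  shows "(to_gens a, to_gens b) \<in> E'"
proof (rule cong_gen_preimage[OF comp_hom_expand[OF forget_rep] is_congruence_free1_profile
      env_rel_profile E'_congruence _ assms])
  fix a b
  assume "(a, b) \<in> env_rel C"
  then obtain x i y where ab: "a = graft (corolla C x) i (corolla C y)" "b = corolla C (pcomp C x i y)"
    and xy: "x \<in> Cplus C" "y \<in> Cplus C" "comp_defined C x i y"
    unfolding env_rel_def by blast
  have "to_gens a = forget (graft (rep x) i (rep y))"
    using ab xy expand_graft[OF forget_rep valid1_corolla] to_gens_corolla by (simp add: forget_graft)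
  moreover have "to_gens b = forget (rep (pcomp C x i y))"
    using ab to_gens_corolla pcomp_Cplus[OF xy] by simp
  ultimately show "(to_gens a, to_gens b) \<in> E'"
    using forget_respects_E[OF rep_pcomp[OF xy(3)]] by simp
qed

lemma valid1_to_env: "valid_tree k' G arG outG' inG' S \<Longrightarrow> valid1 (Cplus C) (ar C) (to_env S)"
  using gen_elem by (intro valid1_relabel) auto

lemma comp_hom_to_env: "comp_hom (free_op1 G arG) (free_op1 (Cplus C) (ar C)) to_env"
  unfolding comp_hom_def comp_defined_free1
  using valid1_to_env by (auto simp: free_op_def relabel_graft valid1_graft)

subsection \<open>Every tree collapses to the corolla of its value\<close>

lemma Node_eq_coloured_corolla:
  assumes "valid (Node g ts)" "\<forall>j<length ts. \<forall>h us. ts ! j \<noteq> Node h us"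
  shows "Node g ts = coloured_corolla g"
proof -
  have "ts ! j = Leaf (inG g (Suc j))" if "j < length ts" for j
    using assms that by (cases "ts ! j") auto
  then show ?thesis
    using assms(1) unfolding coloured_corolla_def by (auto intro: nth_equalityI)
qed

lemma valid_split_child:
  assumes "valid (Node g ts)" "j < length ts"
  shows "valid (Node g (ts[j := Leaf (inG g (Suc j))]))"
    and "comp_defined F (Node g (ts[j := Leaf (inG g (Suc j))])) (nleaves_list (take j ts) + 1) (ts ! j)"
proof -
  let ?A = "Node g (ts[j := Leaf (inG g (Suc j))])"
  have "inG g (Suc j) \<in> {1..k}"
    using assms collection by (auto simp: is_collection_def)
  moreover have "set (ts[j := Leaf (inG g (Suc j))]) \<subseteq> insert (Leaf (inG g (Suc j))) (set ts)"
    by (rule set_update_subset_insert)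
  ultimately show A: "valid ?A"
    using assms by (auto simp: nth_list_update)
  have "leaf_cols ?A ! nleaves_list (take j ts) = inG g (Suc j)"
    using assms(2) by (simp add: upd_conv_take_nth_drop nth_append)
  then show "comp_defined F ?A (nleaves_list (take j ts) + 1) (ts ! j)"
    using A assms by (simp add: comp_defined_free upd_conv_take_nth_drop)
qed

lemma to_env_coloured_corolla:
  assumes "g \<in> G"
  shows "(to_env (coloured_corolla g), corolla C (eval (coloured_corolla g))) \<in> Ee"
proof -
  have "to_env (coloured_corolla g) = corolla C (eval (coloured_corolla g))"
    using gen_elem[OF assms] by (simp add: coloured_corolla_def corolla_def gen_elem_def o_def map_replicate_const)
  then show ?thesis
    using congruence_refl[OF Ee_congruence] valid1_to_env[OF valid_coloured_corolla[OF assms]] by simp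
qed

lemma to_env_eval_graft:
  assumes AB: "comp_defined F A p B" and evals: "eval A \<in> Cplus C" "eval B \<in> Cplus C"
    and IH: "(to_env A, corolla C (eval A)) \<in> Ee" "(to_env B, corolla C (eval B)) \<in> Ee"
  shows "(to_env (graft A p B), corolla C (eval (graft A p B))) \<in> Ee"
proof -
  have "1 \<le> p" "p \<le> nleaves (to_env A)"
    using AB by (simp_all add: comp_defined_free)
  then have "(graft (to_env A) p (to_env B), graft (corolla C (eval A)) p (corolla C (eval B))) \<in> Ee"
    by (rule congruence_free1_graft[OF Ee_congruence IH])
  moreover have "(graft (corolla C (eval A)) p (corolla C (eval B)),
      corolla C (pcomp C (eval A) p (eval B))) \<in> Ee"
    using evals eval_graft(1)[OF AB] by (intro subsetD[OF cong_gen_incl]) (auto simp: env_rel_def)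
  ultimately show ?thesis
    using congruence_trans[OF Ee_congruence] eval_graft(2)[OF AB] by (simp add: relabel_graft)
qed

lemma to_env_eval:
  assumes "valid S" "S = Node g ts"
  shows "(to_env S, corolla C (eval S)) \<in> Ee"
  using assms
proof (induction S arbitrary: g ts rule: measure_induct_rule[where f = size])
  case (less S)
  show ?case
  proof (cases "\<exists>j<length ts. \<exists>h us. ts ! j = Node h us")
    case False
    then show ?thesis
      using Node_eq_coloured_corolla to_env_coloured_corolla less.prems by auto
  next
    case True
    then obtain j h us where j: "j < length ts" "ts ! j = Node h us"
      by blast
    define A where "A = Node g (ts[j := Leaf (inG g (Suc j))])"
    have S: "S = graft A (nleaves_list (take j ts) + 1) (ts ! j)"
      using less.prems(2) Node_eq_graft_child[OF j(1)] by (simp add: A_def)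
    have A: "valid A" and AB: "comp_defined F A (nleaves_list (take j ts) + 1) (ts ! j)"
      using valid_split_child[OF less.prems(1)[unfolded less.prems(2)] j(1)] by (simp_all add: A_def)
    have B: "valid (ts ! j)"
      using less.prems j(1) by simp
    have "size A < size S"
      using size_update_Leaf_less[OF j] less.prems(2) by (simp add: A_def)
    moreover have "size (ts ! j) < size S"
      using size_list_estimation'[OF nth_mem[OF j(1)] le_refl, of size] less.prems(2) by simp
    ultimately have "(to_env A, corolla C (eval A)) \<in> Ee" "(to_env (ts ! j), corolla C (eval (ts ! j))) \<in> Ee"
      using less.IH A B j(2) by (auto simp: A_def)
    then show ?thesis
      using to_env_eval_graft[OF AB] eval_Cplus A B j(2) S by (simp add: A_def)
  qed
qed

lemma R_Leaf_or_Node: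
  assumes "(S, T) \<in> R"
  obtains c d where "S = Leaf c" "T = Leaf d" | g ts h us where "S = Node g ts" "T = Node h us"
proof -
  have S: "valid S" and T: "valid T"
    using R_profile[OF assms] by simp_all
  have same: "nleaves S = nleaves T"
    using R_profile(3)[OF assms] by (metis length_leaf_cols)
  show ?thesis
  proof (cases S)
    case S_Leaf: (Leaf c)
    show ?thesis
    proof (cases T)
      case (Node h us)
      have "2 \<le> nleaves T"
        using T unfolding Node by (rule valid_Node_nleaves)
      with same S_Leaf show ?thesis
        by simp
    qed (use S_Leaf that in blast)
  next
    case S_Node: (Node g ts)
    show ?thesis
    proof (cases T)
      case (Leaf d)
      have "2 \<le> nleaves S"
        using S unfolding S_Node by (rule valid_Node_nleaves)
      with same Leaf show ?thesis
        by simp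
    qed (use S_Node that in blast)
  qed
qed

lemma to_env_respects:
  assumes "(a, b) \<in> E'"
  shows "(to_env a, to_env b) \<in> Ee"
proof (rule cong_gen_preimage[OF comp_hom_to_env is_congruence_free1_profile R'_profile
      Ee_congruence _ assms])
  fix a b
  assume "(a, b) \<in> R'"
  then obtain S T where ab: "a = forget S" "b = forget T" and ST: "(S, T) \<in> R"
    by blast
  from ST show "(to_env a, to_env b) \<in> Ee"
  proof (cases rule: R_Leaf_or_Node)
    case (1 c d)
    then show ?thesis
      using ab congruence_refl[OF Ee_congruence, of "Leaf 1"] by simp
  next
    case (2 g ts h us)
    have S: "valid S" and T: "valid T"
      using R_profile[OF ST] by simp_all
    have "eval S = eval T"
      using eval_eq[OF subsetD[OF cong_gen_incl ST]] .
    then have "(corolla C (eval S), to_env T) \<in> Ee"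
      using congruence_sym[OF Ee_congruence to_env_eval[OF T 2(2)]] by simp
    then show ?thesis
      using ab congruence_trans[OF Ee_congruence to_env_eval[OF S 2(1)]] by simp
  qed
qed

lemma to_env_to_gens: "valid1 (Cplus C) (ar C) a \<Longrightarrow> (to_env (to_gens a), a) \<in> Ee"
proof (induction a)
  case (Leaf c)
  then show ?case
    using congruence_refl[OF Ee_congruence, of "Leaf 1"] by simp
next
  case (Node x ts)
  have x: "x \<in> Cplus C" and len: "length ts = ar C x" and valid: "\<forall>t\<in>set ts. valid1 (Cplus C) (ar C) t"
    using Node.prems by simp_all
  have xC: "x \<in> elems C"
    using x by (simp add: Cplus_def)
  obtain g us where "rep x = Node g us"
    using nleaves_rep[OF xC] x by (cases "rep x") (auto simp: Cplus_def)
  then have "(to_env (rep x), corolla C x) \<in> Ee"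
    using to_env_eval[OF rep(1)[OF xC]] eval_rep[OF xC] by simp
  moreover have "list_all2 (\<lambda>u v. (u, v) \<in> Ee) (map (\<lambda>t. to_env (to_gens t)) ts) ts"
    using Node.IH valid by (simp add: list_all2_conv_all_nth)
  ultimately have "(fill_leaves (to_env (rep x)) (map (\<lambda>t. to_env (to_gens t)) ts),
      fill_leaves (corolla C x) ts) \<in> Ee"
    using len nleaves_rep[OF xC] by (intro fill_leaves_congruent[OF Ee_congruence]) simp_all
  then show ?case
    using len by (simp add: relabel_fill_leaves(1) corolla_def fill_leaves_list_replicate o_def)
qed

lemma to_gens_to_env: "valid1 G arG S \<Longrightarrow> (to_gens (to_env S), S) \<in> E'"
proof (induction S)
  case (Leaf c)
  then show ?case
    using congruence_refl[OF E'_congruence, of "Leaf 1"] by simp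
next
  case (Node g ts)
  have g: "g \<in> G" and len: "length ts = arG g" and valid: "\<forall>t\<in>set ts. valid1 G arG t"
    using Node.prems by simp_all
  have gC: "gen_elem g \<in> elems C"
    using gen_elem[OF g] by (simp add: Cplus_def)
  have "E `` {rep (gen_elem g)} = E `` {coloured_corolla g}"
    using rep(2)[OF gC] eval(2)[OF valid_coloured_corolla[OF g]] by (simp add: gen_elem_def)
  moreover have "rep (gen_elem g) \<in> E `` {rep (gen_elem g)}"
    using congruence_refl[OF E_congruence] rep(1)[OF gC] by simp
  ultimately have "(coloured_corolla g, rep (gen_elem g)) \<in> E"
    by simp
  then have "(forget (coloured_corolla g), forget (rep (gen_elem g))) \<in> E'"
    by (rule forget_respects_E)
  then have "(forget (rep (gen_elem g)), Node g (replicate (arG g) (Leaf 1))) \<in> E'"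
    using congruence_sym[OF E'_congruence] forget_coloured_corolla by simp
  moreover have "list_all2 (\<lambda>u v. (u, v) \<in> E') (map (\<lambda>t. to_gens (to_env t)) ts) ts"
    using Node.IH valid by (simp add: list_all2_conv_all_nth)
  ultimately have "(fill_leaves (forget (rep (gen_elem g))) (map (\<lambda>t. to_gens (to_env t)) ts),
      fill_leaves (Node g (replicate (arG g) (Leaf 1))) ts) \<in> E'"
    using len nleaves_rep[OF gC] gen_elem[OF g] by (intro fill_leaves_congruent[OF E'_congruence]) simp_all
  then show ?case
    using len by (simp add: fill_leaves_list_replicate o_def)
qed

lemma Env_isomorphic: "isomorphic 1 (Env C) (quot_op (free_op1 G arG) E')"
  unfolding Env_eq
proof (rule isomorphic_quot_op[where g = to_env,
      OF Ee_congruence E'_congruence comp_hom_expand[OF forget_rep]])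
  fix a
  assume "a \<in> elems (free_op1 (Cplus C) (ar C))"
  then have a: "valid1 (Cplus C) (ar C) a"
    by simp
  then show "ar (free_op1 G arG) (to_gens a) = ar (free_op1 (Cplus C) (ar C)) a
      \<and> outc (free_op1 G arG) (to_gens a) = outc (free_op1 (Cplus C) (ar C)) a
      \<and> (\<forall>i\<in>{1..ar (free_op1 (Cplus C) (ar C)) a}.
            inc (free_op1 G arG) (to_gens a) i = inc (free_op1 (Cplus C) (ar C)) a i)"
    using valid1_to_gens[OF a] valid1_leaf_cols[OF a] valid1_leaf_cols[of G arG "to_gens a"]
      valid1_tout[OF a] valid1_tout[of G arG "to_gens a"]
    by (simp add: free_op_def)
next
  show "unit (free_op1 (Cplus C) (ar C)) c \<in> elems (free_op1 (Cplus C) (ar C))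
      \<and> to_gens (unit (free_op1 (Cplus C) (ar C)) c) = unit (free_op1 G arG) c" if "c \<in> {1..1}" for c
    using that by (simp add: free_op_def)
qed (use to_gens_respects to_env_respects valid1_to_env to_env_to_gens to_gens_to_env in simp_all)

lemma Env_presentation: "admits_presentation 1 (Env C) G arG (\<lambda>_. 1) (\<lambda>_ _. 1) R'"
proof -
  have "\<forall>(S, T)\<in>R'. ar (free_op1 G arG) S = ar (free_op1 G arG) T
      \<and> outc (free_op1 G arG) S = outc (free_op1 G arG) T
      \<and> (\<forall>i\<in>{1..ar (free_op1 G arG) S}. inc (free_op1 G arG) S i = inc (free_op1 G arG) T i)"
    using is_congruenceD(2-4)[OF E'_congruence subsetD[OF cong_gen_incl]] by fast
  moreover have "R' \<subseteq> elems (free_op1 G arG) \<times> elems (free_op1 G arG)"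
    by (rule subset_trans[OF R'_profile]) auto
  ultimately show ?thesis
    unfolding admits_presentation_def Let_def using Env_isomorphic by simp
qed

end

theorem proposition1p7:
  fixes k :: nat
    and C :: "'a coloperad"
    and G :: "'g set" and arG :: "'g \<Rightarrow> nat" and outG :: "'g \<Rightarrow> nat"
    and inG :: "'g \<Rightarrow> nat \<Rightarrow> nat"
    and R :: "'g stree rel"
  assumes "1 \<le> k"
    and "is_coloperad k C"
    and "is_collection k G arG outG inG"
    and "equiv (elems (free_op G arG outG inG k)) R"
    and "admits_presentation k C G arG outG inG R"
  shows "admits_presentation 1 (Env C) G arG (\<lambda>_. 1) (\<lambda>_ _. 1)
           {(forget S, forget T) | S T. (S, T) \<in> R}"
proof -
  obtain f0 where "is_iso k C (quot_op (free_op G arG outG inG k) (cong_gen (free_op G arG outG inG k) R)) f0"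
    using assms(5) unfolding admits_presentation_def Let_def isomorphic_def by blast
  then interpret presented_coloperad k C G arG outG inG R f0
    using assms(2,3,5) by unfold_locales
  show ?thesis
    by (rule Env_presentation)
qed

end
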